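(* If $(U,\le)$ is an ordered supertropical monoid ($\mathrm{OST}$-monoid), then $U$ is a semiring.
   Context: A supertropical monoid is a commutative monoid $(U,\cdot)$ with absorbing element $0$ and distinguished idempotent $e$ with $ex=0\Rightarrow x=0$, together with a total ordering $\le_M$ on $M:=eU$, compatible with multiplication and with $0$ least, making $M$ a bipotent semiring (addition $=\max$). Define on $U$: $x+y:=y$ if $ex<ey$, $x$ if $ex>ey$, $ex$ if $ex=ey$; $U$ is a semiring if this addition is associative and distributive. An OST-monoid is a supertropical monoid $U$ with a total ordering $\le$ on the set $U$ such that: (OST1) $x\le y\Rightarrow xz\le yz$; (OST2) for $x,y\in M$, $x\le y\Leftrightarrow x\le_M y$; (OST3) $0\le1\le e$. *)

theory Defs
  imports Main
begin

text \<open>The supertropical monoid U is modelled as a whole type 'a, with multiplication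
  mult, unit one, absorbing element zero, the distinguished idempotent e, the
  ordering leM on M = eU, and (for OST-monoids) a total ordering le on U.\<close>

definition ghostM :: "('a \<Rightarrow> 'a \<Rightarrow> 'a) \<Rightarrow> 'a \<Rightarrow> 'a set" where
  "ghostM mult e = {mult e x | x. True}"

definition supertropical_monoid ::
  "('a \<Rightarrow> 'a \<Rightarrow> 'a) \<Rightarrow> 'a \<Rightarrow> 'a \<Rightarrow> 'a \<Rightarrow> ('a \<Rightarrow> 'a \<Rightarrow> bool) \<Rightarrow> bool" where
  "supertropical_monoid mult one zero e leM \<longleftrightarrow>
     \<comment> \<open>commutative monoid\<close>
     (\<forall>x y z. mult (mult x y) z = mult x (mult y z)) \<and>
     (\<forall>x y. mult x y = mult y x) \<and>
     (\<forall>x. mult one x = x) \<and>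
     \<comment> \<open>absorbing zero\<close>
     (\<forall>x. mult zero x = zero) \<and>
     \<comment> \<open>idempotent e with ex = 0 implies x = 0\<close>
     mult e e = e \<and>
     (\<forall>x. mult e x = zero \<longrightarrow> x = zero) \<and>
     \<comment> \<open>total ordering on M = eU\<close>
     (\<forall>x\<in>ghostM mult e. leM x x) \<and>
     (\<forall>x\<in>ghostM mult e. \<forall>y\<in>ghostM mult e. leM x y \<and> leM y x \<longrightarrow> x = y) \<and>
     (\<forall>x\<in>ghostM mult e. \<forall>y\<in>ghostM mult e. \<forall>z\<in>ghostM mult e.
        leM x y \<and> leM y z \<longrightarrow> leM x z) \<and>
     (\<forall>x\<in>ghostM mult e. \<forall>y\<in>ghostM mult e. leM x y \<or> leM y x) \<and>
     \<comment> \<open>compatible with multiplication\<close>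
     (\<forall>x\<in>ghostM mult e. \<forall>y\<in>ghostM mult e. \<forall>z\<in>ghostM mult e.
        leM x y \<longrightarrow> leM (mult x z) (mult y z)) \<and>
     \<comment> \<open>0 is least\<close>
     (\<forall>x\<in>ghostM mult e. leM zero x)"

definition st_add :: "('a \<Rightarrow> 'a \<Rightarrow> 'a) \<Rightarrow> 'a \<Rightarrow> ('a \<Rightarrow> 'a \<Rightarrow> bool) \<Rightarrow> 'a \<Rightarrow> 'a \<Rightarrow> 'a" where
  "st_add mult e leM x y =
     (if leM (mult e x) (mult e y) \<and> mult e x \<noteq> mult e y then y
      else if leM (mult e y) (mult e x) \<and> mult e x \<noteq> mult e y then x
      else mult e x)"

definition st_is_semiring :: "('a \<Rightarrow> 'a \<Rightarrow> 'a) \<Rightarrow> 'a \<Rightarrow> ('a \<Rightarrow> 'a \<Rightarrow> bool) \<Rightarrow> bool" where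
  "st_is_semiring mult e leM \<longleftrightarrow>
     (\<forall>x y z. st_add mult e leM (st_add mult e leM x y) z
              = st_add mult e leM x (st_add mult e leM y z)) \<and>
     (\<forall>x y z. mult x (st_add mult e leM y z)
              = st_add mult e leM (mult x y) (mult x z)) \<and>
     (\<forall>x y z. mult (st_add mult e leM x y) z
              = st_add mult e leM (mult x z) (mult y z))"

definition OST_monoid ::
  "('a \<Rightarrow> 'a \<Rightarrow> 'a) \<Rightarrow> 'a \<Rightarrow> 'a \<Rightarrow> 'a \<Rightarrow> ('a \<Rightarrow> 'a \<Rightarrow> bool) \<Rightarrow> ('a \<Rightarrow> 'a \<Rightarrow> bool) \<Rightarrow> bool" where
  "OST_monoid mult one zero e leM le \<longleftrightarrow>
     supertropical_monoid mult one zero e leM \<and>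
     \<comment> \<open>le is a total ordering on U\<close>
     (\<forall>x. le x x) \<and>
     (\<forall>x y. le x y \<and> le y x \<longrightarrow> x = y) \<and>
     (\<forall>x y z. le x y \<and> le y z \<longrightarrow> le x z) \<and>
     (\<forall>x y. le x y \<or> le y x) \<and>
     \<comment> \<open>OST1\<close>
     (\<forall>x y z. le x y \<longrightarrow> le (mult x z) (mult y z)) \<and>
     \<comment> \<open>OST2\<close>
     (\<forall>x\<in>ghostM mult e. \<forall>y\<in>ghostM mult e. le x y \<longleftrightarrow> leM x y) \<and>
     \<comment> \<open>OST3\<close>
     le zero one \<and> le one e"

end

theory Submission
  imports Defs
begin

(* The sum x + y is the summand with strictly larger ghost, or the common ghost
   e x = e y in case of a tie, so e (x + y) = max (e x) (e y). Associativity holds in every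
   supertropical monoid: a sum of three elements is its unique summand of strictly largest
   ghost if there is one, and a ghost otherwise. Distributivity is where the order on all
   of U enters: 1 \<le> e gives z \<le> e z, and e y < e z forces e y \<le> z. Multiplying
   e y \<le> z \<le> e z by x shows that x z is a ghost whenever x e y = x e z, which is
   exactly the case where x (y + z) = x z has to equal the tie x y + x z = e x z. *)

locale supertropical =
  fixes mult :: "'a \<Rightarrow> 'a \<Rightarrow> 'a" and one zero e :: 'a and leM :: "'a \<Rightarrow> 'a \<Rightarrow> bool"
  assumes supertropical_monoid: "supertropical_monoid mult one zero e leM"
begin

abbreviation ghost :: "'a \<Rightarrow> 'a" where "ghost x \<equiv> mult e x"

abbreviation lessM :: "'a \<Rightarrow> 'a \<Rightarrow> bool" where "lessM a b \<equiv> leM a b \<and> a \<noteq> b"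

abbreviation add :: "'a \<Rightarrow> 'a \<Rightarrow> 'a" where "add \<equiv> st_add mult e leM"

lemma mult_assoc: "mult (mult x y) z = mult x (mult y z)"
  using supertropical_monoid unfolding supertropical_monoid_def by blast

lemma mult_commute: "mult x y = mult y x"
  using supertropical_monoid unfolding supertropical_monoid_def by blast

lemma ghost_ghost [simp]: "ghost (ghost x) = ghost x"
  using supertropical_monoid unfolding supertropical_monoid_def by (metis mult_assoc)

lemma ghost_in_ghostM: "ghost x \<in> ghostM mult e"
  unfolding ghostM_def by blast

lemma leM_ghost_antisym: "leM (ghost x) (ghost y) \<Longrightarrow> leM (ghost y) (ghost x) \<Longrightarrow> ghost x = ghost y"
proof -
  have "\<forall>a\<in>ghostM mult e. \<forall>b\<in>ghostM mult e. leM a b \<and> leM b a \<longrightarrow> a = b"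
    using supertropical_monoid unfolding supertropical_monoid_def by blast
  then show "leM (ghost x) (ghost y) \<Longrightarrow> leM (ghost y) (ghost x) \<Longrightarrow> ghost x = ghost y"
    using ghost_in_ghostM by blast
qed

lemma leM_ghost_trans:
  "leM (ghost x) (ghost y) \<Longrightarrow> leM (ghost y) (ghost z) \<Longrightarrow> leM (ghost x) (ghost z)"
proof -
  have "\<forall>a\<in>ghostM mult e. \<forall>b\<in>ghostM mult e. \<forall>c\<in>ghostM mult e. leM a b \<and> leM b c \<longrightarrow> leM a c"
    using supertropical_monoid unfolding supertropical_monoid_def by blast
  then show "leM (ghost x) (ghost y) \<Longrightarrow> leM (ghost y) (ghost z) \<Longrightarrow> leM (ghost x) (ghost z)"
    using ghost_in_ghostM by blast
qed

lemma leM_ghost_total: "leM (ghost x) (ghost y) \<or> leM (ghost y) (ghost x)"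
proof -
  have "\<forall>a\<in>ghostM mult e. \<forall>b\<in>ghostM mult e. leM a b \<or> leM b a"
    using supertropical_monoid unfolding supertropical_monoid_def by blast
  then show ?thesis
    using ghost_in_ghostM by blast
qed

lemma add_eq_right: "lessM (ghost x) (ghost y) \<Longrightarrow> add x y = y"
  by (simp add: st_add_def)

lemma add_eq_left: "lessM (ghost y) (ghost x) \<Longrightarrow> add x y = x"
  using leM_ghost_antisym by (auto simp: st_add_def)

lemma add_eq_ghost: "ghost x = ghost y \<Longrightarrow> add x y = ghost x"
  by (simp add: st_add_def)

lemma ghost_trichotomy:
  obtains "lessM (ghost x) (ghost y)" | "ghost x = ghost y" | "lessM (ghost y) (ghost x)"
  using leM_ghost_total[of x y] by (cases "ghost x = ghost y") auto

lemma leM_lessM_ghost_trans: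
  "leM (ghost x) (ghost y) \<Longrightarrow> lessM (ghost y) (ghost z) \<Longrightarrow> lessM (ghost x) (ghost z)"
  using leM_ghost_trans leM_ghost_antisym by metis

lemma add_commute: "add x y = add y x"
  using leM_ghost_total[of x y] leM_ghost_antisym[of x y] by (auto simp: st_add_def)

lemma ghost_add: "ghost (add x y) = (if leM (ghost x) (ghost y) then ghost y else ghost x)"
  using leM_ghost_antisym by (auto simp: st_add_def)

lemma add_add_eq_left:
  "lessM (ghost y) (ghost x) \<Longrightarrow> lessM (ghost z) (ghost x) \<Longrightarrow> add (add x y) z = x"
  by (simp add: add_eq_left)

lemma add_add_eq_right:
  "lessM (ghost x) (ghost z) \<Longrightarrow> lessM (ghost y) (ghost z) \<Longrightarrow> add (add x y) z = z"
  by (rule add_eq_right) (simp add: ghost_add)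

lemma add_add_ghost:
  assumes not_x: "\<not> (lessM (ghost y) (ghost x) \<and> lessM (ghost z) (ghost x))"
    and not_y: "\<not> (lessM (ghost x) (ghost y) \<and> lessM (ghost z) (ghost y))"
    and not_z: "\<not> (lessM (ghost x) (ghost z) \<and> lessM (ghost y) (ghost z))"
  shows "ghost (add (add x y) z) = add (add x y) z"
proof -
  define u where "u = add x y"
  have x_le_u: "leM (ghost x) (ghost u)" and y_le_u: "leM (ghost y) (ghost u)"
    using leM_ghost_total[of x y] leM_ghost_total[of x x] leM_ghost_total[of y y]
    by (auto simp: u_def ghost_add)
  have "ghost (add u z) = add u z"
  proof (cases rule: ghost_trichotomy[of u z])
    case 1
    then show ?thesis
      using not_z x_le_u y_le_u leM_lessM_ghost_trans by blast
  next
    case 2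
    then show ?thesis
      by (simp add: add_eq_ghost)
  next
    case z_less: 3
    have "ghost u = u"
      by (cases rule: ghost_trichotomy[of x y])
        (use z_less not_x not_y in \<open>simp_all add: u_def add_eq_left add_eq_right add_eq_ghost\<close>)
    with z_less show ?thesis
      by (simp add: add_eq_left)
  qed
  then show ?thesis
    by (simp add: u_def)
qed

lemma ghost_add_assoc: "ghost (add (add x y) z) = ghost (add x (add y z))"
  using leM_ghost_total[of x y] leM_ghost_total[of x z] leM_ghost_total[of y z]
    leM_ghost_antisym[of x y] leM_ghost_antisym[of x z] leM_ghost_antisym[of y z]
    leM_ghost_trans[of x y z] leM_ghost_trans[of y z x] leM_ghost_trans[of z x y]
    leM_ghost_trans[of x z y] leM_ghost_trans[of z y x] leM_ghost_trans[of y x z]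
  by (auto simp: ghost_add)

lemma add_assoc: "add (add x y) z = add x (add y z)"
proof -
  consider "lessM (ghost y) (ghost x) \<and> lessM (ghost z) (ghost x)"
    | "lessM (ghost x) (ghost y) \<and> lessM (ghost z) (ghost y)"
    | "lessM (ghost x) (ghost z) \<and> lessM (ghost y) (ghost z)"
    | "\<not> (lessM (ghost y) (ghost x) \<and> lessM (ghost z) (ghost x))"
      "\<not> (lessM (ghost x) (ghost y) \<and> lessM (ghost z) (ghost y))"
      "\<not> (lessM (ghost x) (ghost z) \<and> lessM (ghost y) (ghost z))"
    by blast
  then show ?thesis
  proof cases
    case 1
    then show ?thesis
      by (metis add_commute add_add_eq_left add_add_eq_right)
  next
    case 2
    then have "add (add y x) z = y" and "add (add y z) x = y"
      by (simp_all add: add_add_eq_left)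
    then show ?thesis
      by (metis add_commute)
  next
    case 3
    then have "add (add x y) z = z" and "add (add z y) x = z"
      by (simp_all add: add_add_eq_left add_add_eq_right)
    then show ?thesis
      by (metis add_commute)
  next
    case 4
    have "add (add y z) x = ghost (add (add y z) x)"
      using 4 by (intro add_add_ghost[symmetric]) blast+
    also have "\<dots> = ghost (add (add x y) z)"
      using ghost_add_assoc add_commute by metis
    also have "\<dots> = add (add x y) z"
      by (rule add_add_ghost[OF 4])
    finally show ?thesis
      using add_commute by metis
  qed
qed

end

locale ordered_supertropical =
  fixes mult :: "'a \<Rightarrow> 'a \<Rightarrow> 'a" and one zero e :: 'a and leM le :: "'a \<Rightarrow> 'a \<Rightarrow> bool"
  assumes OST_monoid: "OST_monoid mult one zero e leM le"

sublocale ordered_supertropical \<subseteq> supertropical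
  using OST_monoid unfolding OST_monoid_def by unfold_locales blast

context ordered_supertropical
begin

lemma le_antisym: "le x y \<Longrightarrow> le y x \<Longrightarrow> x = y"
  using OST_monoid unfolding OST_monoid_def by blast

lemma le_total: "le x y \<or> le y x"
  using OST_monoid unfolding OST_monoid_def by blast

lemma mult_right_mono: "le x y \<Longrightarrow> le (mult x z) (mult y z)"
  using OST_monoid unfolding OST_monoid_def by blast

lemma mult_left_mono: "le x y \<Longrightarrow> le (mult z x) (mult z y)"
  using mult_right_mono[of x y z] by (simp only: mult_commute[of z])

lemma le_ghost_iff_leM: "le (ghost x) (ghost y) \<longleftrightarrow> leM (ghost x) (ghost y)"
proof -
  have "\<forall>a\<in>ghostM mult e. \<forall>b\<in>ghostM mult e. le a b \<longleftrightarrow> leM a b"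
    using OST_monoid unfolding OST_monoid_def by blast
  then show ?thesis
    using ghost_in_ghostM by blast
qed

lemma le_ghost: "le x (ghost x)"
proof -
  have "le one e"
    using OST_monoid unfolding OST_monoid_def by blast
  then have "le (mult one x) (mult e x)"
    by (rule mult_right_mono)
  moreover have "mult one x = x"
    using supertropical_monoid unfolding supertropical_monoid_def by blast
  ultimately show ?thesis
    by simp
qed

lemma lessM_ghost_imp_le: "lessM (ghost y) (ghost z) \<Longrightarrow> le (ghost y) z"
proof (rule ccontr)
  assume less: "lessM (ghost y) (ghost z)" and "\<not> le (ghost y) z"
  then have "le z (ghost y)"
    using le_total by blast
  then have "leM (ghost z) (ghost y)"
    using mult_left_mono[of z "ghost y" e] by (simp add: le_ghost_iff_leM)
  with less show False
    using leM_ghost_antisym by blast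
qed

lemma ghost_mult: "ghost (mult x y) = mult x (ghost y)"
  by (metis mult_assoc mult_commute)

lemma mult_add_distrib_of_lessM:
  assumes less: "lessM (ghost y) (ghost z)"
  shows "mult x (add y z) = add (mult x y) (mult x z)"
proof -
  have lower: "le (mult x (ghost y)) (mult x z)"
    using mult_left_mono[OF lessM_ghost_imp_le[OF less]] .
  have upper: "le (mult x z) (mult x (ghost z))"
    using le_ghost[of "mult x z"] unfolding ghost_mult .
  have "le (ghost y) (ghost z)"
    using less le_ghost_iff_leM by blast
  then have "le (ghost (mult x y)) (ghost (mult x z))"
    unfolding ghost_mult by (rule mult_left_mono)
  then have ghost_le: "leM (ghost (mult x y)) (ghost (mult x z))"
    using le_ghost_iff_leM by blast
  show ?thesis
  proof (cases "mult x (ghost y) = mult x (ghost z)")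
    case True
    then have "mult x z = mult x (ghost z)"
      using lower upper le_antisym by metis
    then have "add (mult x y) (mult x z) = mult x z"
      using True add_eq_ghost[of "mult x y" "mult x z"] unfolding ghost_mult by metis
    then show ?thesis
      using less add_eq_right by metis
  next
    case False
    then have "lessM (ghost (mult x y)) (ghost (mult x z))"
      using ghost_le unfolding ghost_mult by blast
    then show ?thesis
      using less add_eq_right by metis
  qed
qed

lemma mult_add_distrib: "mult x (add y z) = add (mult x y) (mult x z)"
proof (cases rule: ghost_trichotomy[of y z])
  case 1
  then show ?thesis
    by (rule mult_add_distrib_of_lessM)
next
  case 2
  then show ?thesis
    using add_eq_ghost ghost_mult by metis
next
  case 3
  then show ?thesis
    using mult_add_distrib_of_lessM add_commute by metis
qed

lemma add_mult_distrib: "mult (add x y) z = add (mult x z) (mult y z)"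
  using mult_add_distrib mult_commute by metis

end

theorem theorem61p4:
  fixes mult :: "'a \<Rightarrow> 'a \<Rightarrow> 'a" and one zero e :: 'a
    and leM le :: "'a \<Rightarrow> 'a \<Rightarrow> bool"
  assumes "OST_monoid mult one zero e leM le"
  shows "st_is_semiring mult e leM"
proof -
  interpret ordered_supertropical mult one zero e leM le
    by (rule ordered_supertropical.intro) (fact assms)
  show ?thesis
    unfolding st_is_semiring_def
    using add_assoc mult_add_distrib add_mult_distrib by blast
qed

end
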